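(* Consider the setting described in the context, with $\rho>0$, $\gamma>0$, symmetric positive semidefinite $P_i,Q_i\in\mathbb{R}^{n\times n}$, and let $\bm{u}^k=(\check{\bm{W}}^k,\hat{\bm{W}}^k,\lambda^k)$ be the sequence generated by the algorithm and $\bm{u}^*=(\check{\bm{W}}^*,\hat{\bm{W}}^*,\lambda^* )$ a KKT point of (P1). Then for every $k\ge 1$, $$\|\bm{u}^k-\bm{u}^*\|^2_{\bm{G}}-\|\bm{u}^{k+1}-\bm{u}^*\|^2_{\bm{G}}\ \ge\ \|\bm{u}^k-\bm{u}^{k+1}\|^2_{\bm{M}},$$ where $$\|\bm{u}^k-\bm{u}^{k+1}\|^2_{\bm{M}}=\|\check{\bm{W}}^k-\check{\bm{W}}^{k+1}\|^2_{\bm{G}_1}+\|\hat{\bm{W}}^k-\hat{\bm{W}}^{k+1}\|^2_{\bm{G}_2-\bm{G}_3}+\frac{2-\gamma}{\gamma^2\rho}\|\lambda^k-\lambda^{k+1}\|^2+\frac{2}{\gamma}(\lambda^k-\lambda^{k+1})^T\bm{A}(\check{\bm{W}}^k-\check{\bm{W}}^{k+1}).$$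
   Context: Let $\mathcal{G}=(\mathcal{V},\mathcal{E})$ be a connected undirected graph with $\mathcal{V}=\{1,\dots,N\}$, $N\ge 2$, and let $d_i$ be the degree of $i$. Variables are $\check{\bm{w}}_i,\hat{\bm{w}}_i\in\mathbb{R}^n$; write $\check{\bm{W}}=(\check{\bm{w}}_1,\dots,\check{\bm{w}}_N)\in\mathbb{R}^{Nn}$, $\hat{\bm{W}}$ likewise, $\bm{z}_i=(\check{\bm{w}}_i,\hat{\bm{w}}_i)$, $\bm{Z}=(\check{\bm{W}},\hat{\bm{W}})$. The matrix $\bm{A}\in\mathbb{R}^{|\mathcal{E}|n\times Nn}$ has one block row per edge $\{i,j\}$ ($i<j$) with $I_n$ in block column $i$, $-I_n$ in block column $j$ and zeros elsewhere; $A_i$ denotes its $i$-th block column, so $\bm{A}\check{\bm{W}}=\sum_i A_i\check{\bm{w}}_i$, $A_i^TA_i=d_iI_n$, and for $i\ne j$, $A_i^TA_j=-I_n$ if $\{i,j\}\in\mathcal{E}$ and $0$ otherwise. Each $f_i:\mathbb{R}^n\times\mathbb{R}^n\to\mathbb{R}$ is differentiable and jointly convex in $(\check{\bm{w}}_i,\hat{\bm{w}}_i)$, with $\|\nabla f_i(\bm{z}^1)-\nabla f_i(\bm{z}^2)\|\le C_i\|\bm{z}^1-\bm{z}^2\|$ for all $\bm{z}^1,\bm{z}^2$. Let $\mu_1\ge0$, $\mu_2>0$, $F_i(\bm{z}_i)=f_i(\check{\bm{w}}_i,\hat{\bm{w}}_i)+\frac{\mu_1}{2}\|\check{\bm{w}}_i\|^2+\frac{\mu_2}{2}\|\hat{\bm{w}}_i\|^2$,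 $\bm{F}(\bm{Z})=\sum_iF_i(\bm{z}_i)$, and let $m$ be a constant with $0<m\le\mu_2$ (a strong convexity modulus of $\hat{\bm{w}}\mapsto\frac{\mu_2}{2}\|\hat{\bm{w}}\|^2$). Problem (P1): minimize $\bm{F}(\bm{Z})$ subject to $\bm{A}\check{\bm{W}}=0$. A KKT point of (P1) is $(\check{\bm{W}}^*,\hat{\bm{W}}^*,\lambda^* )$ with $\bm{A}\check{\bm{W}}^*=0$, $A_i^T\lambda^*=\nabla_{\check{\bm{w}}_i}F_i(\bm{z}_i^* )$, $\nabla_{\hat{\bm{w}}_i}F_i(\bm{z}_i^* )=0$ for all $i$. Algorithm: with $\mathcal{L}_\rho(\check{\bm{W}},\hat{\bm{W}},\lambda)=\bm{F}(\bm{Z})-\lambda^T\bm{A}\check{\bm{W}}+\frac{\rho}{2}\|\bm{A}\check{\bm{W}}\|^2$, starting from arbitrary $\check{\bm{W}}^0,\hat{\bm{W}}^0,\lambda^0$, for $k=0,1,\dots$: (i) for all $i$ in parallel, $\check{\bm{w}}_i^{k+1}=\arg\min_{\check{\bm{w}}_i}\mathcal{L}_\rho(\check{\bm{w}}_i,\check{\bm{W}}^k_{-i},\hat{\bm{W}}^k,\lambda^k)+\frac12\|\check{\bm{w}}_i-\check{\bm{w}}_i^k\|^2_{P_i}$, where $\check{\bm{W}}^k_{-i}$ are the other blocks at iteration $k$; (ii) $\lambda^{k+1}=\lambda^k-\gamma\rho\bm{A}\check{\bm{W}}^{k+1}$; (iii) for all $i$ in parallel, $\hat{\bm{w}}_i^{k+1}=\arg\min_{\hat{\bm{w}}_i}F_i(\check{\bm{w}}_i^{k+1},\hat{\bm{w}}_i)+\frac12\|\hat{\bm{w}}_i-\hat{\bm{w}}_i^k\|^2_{Q_i}$.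 Notation: $\|x\|_S^2=x^TSx$; $\bm{G}_1=\mathrm{blkdiag}(\rho A_i^TA_i+P_i)_{i}$, $\bm{G}_2=\mathrm{blkdiag}(Q_i)_i$, $\bm{G}_3=\mathrm{blkdiag}\big(\frac{C_i}{m}(C_i+m)I_n\big)_i$, $\bm{G}=\mathrm{blkdiag}(\bm{G}_1,\bm{G}_2,\frac{1}{\gamma\rho}I)$, and $\bm{M}=\begin{bmatrix}\bm{G}_1&0&\frac1\gamma\bm{A}^T\\0&\bm{G}_2-\bm{G}_3&0\\\frac1\gamma\bm{A}&0&\frac{2-\gamma}{\gamma^2\rho}I\end{bmatrix}$. *)

theory Defs
  imports "HOL-Analysis.Analysis"
begin

type_synonym 'n vec = "real ^ 'n"
type_synonym edge = "nat \<times> nat"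

text \<open>Graph on vertices {1..N}; each undirected edge {i,j} with i<j is stored as the pair (i,j).\<close>
definition connected_graph :: "nat \<Rightarrow> edge set \<Rightarrow> bool" where
  "connected_graph N E \<longleftrightarrow>
     E \<subseteq> {(i,j). 1 \<le> i \<and> i < j \<and> j \<le> N} \<and>
     (\<forall>i\<in>{1..N}. \<forall>j\<in>{1..N}. (i,j) \<in> (E \<union> E\<inverse>)\<^sup>*)"

text \<open>Block column A_i applied to x (one block per edge): x on edges (i,j), -x on edges (j,i).\<close>
definition Acol :: "edge set \<Rightarrow> nat \<Rightarrow> 'n::finite vec \<Rightarrow> edge \<Rightarrow> 'n::finite vec" where
  "Acol E i x = (\<lambda>e. if e \<in> E \<and> fst e = i then x else if e \<in> E \<and> snd e = i then - x else 0)"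

definition AW :: "edge set \<Rightarrow> (nat \<Rightarrow> 'n::finite vec) \<Rightarrow> edge \<Rightarrow> 'n::finite vec" where
  "AW E W = (\<lambda>e. if e \<in> E then W (fst e) - W (snd e) else 0)"

definition ATi :: "edge set \<Rightarrow> nat \<Rightarrow> (edge \<Rightarrow> 'n::finite vec) \<Rightarrow> 'n::finite vec" where
  "ATi E i lam = (\<Sum>e\<in>E. (if fst e = i then lam e else if snd e = i then - lam e else 0))"

definition einner :: "edge set \<Rightarrow> (edge \<Rightarrow> 'n::finite vec) \<Rightarrow> (edge \<Rightarrow> 'n::finite vec) \<Rightarrow> real" where
  "einner E a b = (\<Sum>e\<in>E. a e \<bullet> b e)"

definition qf :: "real ^ 'n::finite ^ 'n::finite \<Rightarrow> 'n::finite vec \<Rightarrow> real" where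
  "qf S x = x \<bullet> (S *v x)"

definition psd_sym :: "real ^ 'n::finite ^ 'n::finite \<Rightarrow> bool" where
  "psd_sym S \<longleftrightarrow> transpose S = S \<and> (\<forall>x. 0 \<le> qf S x)"

definition Fi :: "(nat \<Rightarrow> 'n::finite vec \<times> 'n::finite vec \<Rightarrow> real) \<Rightarrow> real \<Rightarrow> real \<Rightarrow> nat \<Rightarrow> 'n::finite vec \<Rightarrow> 'n::finite vec \<Rightarrow> real" where
  "Fi f mu1 mu2 i w v = f i (w, v) + mu1 / 2 * (norm w)\<^sup>2 + mu2 / 2 * (norm v)\<^sup>2"

definition FF :: "(nat \<Rightarrow> 'n::finite vec \<times> 'n::finite vec \<Rightarrow> real) \<Rightarrow> real \<Rightarrow> real \<Rightarrow> nat \<Rightarrow> (nat \<Rightarrow> 'n::finite vec) \<Rightarrow> (nat \<Rightarrow> 'n::finite vec) \<Rightarrow> real" where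
  "FF f mu1 mu2 N Wc Wh = (\<Sum>i\<in>{1..N}. Fi f mu1 mu2 i (Wc i) (Wh i))"

definition Lag :: "(nat \<Rightarrow> 'n::finite vec \<times> 'n::finite vec \<Rightarrow> real) \<Rightarrow> real \<Rightarrow> real \<Rightarrow> nat \<Rightarrow> edge set \<Rightarrow> real
    \<Rightarrow> (nat \<Rightarrow> 'n::finite vec) \<Rightarrow> (nat \<Rightarrow> 'n::finite vec) \<Rightarrow> (edge \<Rightarrow> 'n::finite vec) \<Rightarrow> real" where
  "Lag f mu1 mu2 N E rho Wc Wh lam =
     FF f mu1 mu2 N Wc Wh - einner E lam (AW E Wc) + rho / 2 * einner E (AW E Wc) (AW E Wc)"

text \<open>KKT point of (P1); grad i z is the gradient of f_i at z = (check w, hat w).\<close>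
definition KKT :: "(nat \<Rightarrow> 'n::finite vec \<times> 'n::finite vec \<Rightarrow> 'n::finite vec \<times> 'n::finite vec) \<Rightarrow> real \<Rightarrow> real \<Rightarrow> nat \<Rightarrow> edge set
    \<Rightarrow> (nat \<Rightarrow> 'n::finite vec) \<Rightarrow> (nat \<Rightarrow> 'n::finite vec) \<Rightarrow> (edge \<Rightarrow> 'n::finite vec) \<Rightarrow> bool" where
  "KKT grad mu1 mu2 N E Wc Wh lam \<longleftrightarrow>
     (\<forall>e\<in>E. AW E Wc e = 0) \<and>
     (\<forall>i\<in>{1..N}. ATi E i lam = fst (grad i (Wc i, Wh i)) + mu1 *\<^sub>R Wc i \<and>
                  snd (grad i (Wc i, Wh i)) + mu2 *\<^sub>R Wh i = 0)"

text \<open>The iteration (i)-(iii), stated via minimality of the subproblem solutions.\<close>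
definition alg_seq :: "(nat \<Rightarrow> 'n::finite vec \<times> 'n::finite vec \<Rightarrow> real) \<Rightarrow> real \<Rightarrow> real \<Rightarrow> nat \<Rightarrow> edge set \<Rightarrow> real \<Rightarrow> real
    \<Rightarrow> (nat \<Rightarrow> real ^ 'n::finite ^ 'n::finite) \<Rightarrow> (nat \<Rightarrow> real ^ 'n::finite ^ 'n::finite)
    \<Rightarrow> (nat \<Rightarrow> nat \<Rightarrow> 'n::finite vec) \<Rightarrow> (nat \<Rightarrow> nat \<Rightarrow> 'n::finite vec) \<Rightarrow> (nat \<Rightarrow> edge \<Rightarrow> 'n::finite vec) \<Rightarrow> bool" where
  "alg_seq f mu1 mu2 N E rho gamma P Q Wc Wh lam \<longleftrightarrow>
     (\<forall>k. \<forall>i\<in>{1..N}. \<forall>w.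
        Lag f mu1 mu2 N E rho ((Wc k)(i := Wc (Suc k) i)) (Wh k) (lam k)
          + 1/2 * qf (P i) (Wc (Suc k) i - Wc k i)
        \<le> Lag f mu1 mu2 N E rho ((Wc k)(i := w)) (Wh k) (lam k)
          + 1/2 * qf (P i) (w - Wc k i)) \<and>
     (\<forall>k. \<forall>e\<in>E. lam (Suc k) e = lam k e - (gamma * rho) *\<^sub>R AW E (Wc (Suc k)) e) \<and>
     (\<forall>k. \<forall>i\<in>{1..N}. \<forall>v.
        Fi f mu1 mu2 i (Wc (Suc k) i) (Wh (Suc k) i) + 1/2 * qf (Q i) (Wh (Suc k) i - Wh k i)
        \<le> Fi f mu1 mu2 i (Wc (Suc k) i) v + 1/2 * qf (Q i) (v - Wh k i))"

text \<open>||(dWc,dWh,dlam)||_G^2 with G = blkdiag(G1, G2, 1/(gamma rho) I),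
  G1 = blkdiag(rho A_i^T A_i + P_i), G2 = blkdiag(Q_i).\<close>
definition normG :: "nat \<Rightarrow> edge set \<Rightarrow> real \<Rightarrow> real \<Rightarrow> (nat \<Rightarrow> real ^ 'n::finite ^ 'n::finite) \<Rightarrow> (nat \<Rightarrow> real ^ 'n::finite ^ 'n::finite)
    \<Rightarrow> (nat \<Rightarrow> 'n::finite vec) \<Rightarrow> (nat \<Rightarrow> 'n::finite vec) \<Rightarrow> (edge \<Rightarrow> 'n::finite vec) \<Rightarrow> real" where
  "normG N E rho gamma P Q dWc dWh dlam =
     (\<Sum>i\<in>{1..N}. rho * einner E (Acol E i (dWc i)) (Acol E i (dWc i)) + qf (P i) (dWc i))
     + (\<Sum>i\<in>{1..N}. qf (Q i) (dWh i))
     + 1 / (gamma * rho) * einner E dlam dlam"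

text \<open>||(dWc,dWh,dlam)||_M^2, expanded as in the statement; G3 = blkdiag(C_i/m (C_i+m) I).\<close>
definition normM :: "nat \<Rightarrow> edge set \<Rightarrow> real \<Rightarrow> real \<Rightarrow> (nat \<Rightarrow> real ^ 'n::finite ^ 'n::finite) \<Rightarrow> (nat \<Rightarrow> real ^ 'n::finite ^ 'n::finite)
    \<Rightarrow> (nat \<Rightarrow> real) \<Rightarrow> real \<Rightarrow> (nat \<Rightarrow> 'n::finite vec) \<Rightarrow> (nat \<Rightarrow> 'n::finite vec) \<Rightarrow> (edge \<Rightarrow> 'n::finite vec) \<Rightarrow> real" where
  "normM N E rho gamma P Q C m dWc dWh dlam =
     (\<Sum>i\<in>{1..N}. rho * einner E (Acol E i (dWc i)) (Acol E i (dWc i)) + qf (P i) (dWc i))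
     + (\<Sum>i\<in>{1..N}. qf (Q i) (dWh i) - C i / m * (C i + m) * (norm (dWh i))\<^sup>2)
     + (2 - gamma) / (gamma\<^sup>2 * rho) * einner E dlam dlam
     + 2 / gamma * einner E dlam (AW E dWc)"

end

theory Submission
  imports Defs
begin

(* The first-order conditions of the two primal subproblems, subtracted
   from the KKT conditions, express the gradient gaps of F_i at the new iterate through
   A_i^T [lambda^k - lambda*], rho A_i^T A W^k and the proximal terms. Pairing them with
   u^(k+1) - u* and using convexity and the C_i-Lipschitz gradient of f_i gives a three-point
   inequality at every node, whose only loss, the G_3 term, comes from the stale hat-w^k used in
   step (i). Summed over the nodes, the dual update A W^(k+1) = [lambda^k - lambda^(k+1)] / gamma rho
   turns every constraint term into one in lambda^k - lambda^(k+1), and expanding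
   ||u^k - u*||_G^2 = ||[u^(k+1) - u*] + [u^k - u^(k+1)]||_G^2 yields the claim. *)

section \<open>Convex functions with Lipschitz gradient\<close>

lemma has_real_derivative_along_line:
  fixes g :: "'a::real_inner \<Rightarrow> real"
  assumes "\<forall>z. (g has_derivative (\<lambda>h. G z \<bullet> h)) (at z)"
  shows "((\<lambda>t. g (a + t *\<^sub>R d)) has_real_derivative (G (a + t *\<^sub>R d) \<bullet> d)) (at t)"
proof -
  have "((\<lambda>t. a + t *\<^sub>R d) has_derivative (\<lambda>s. s *\<^sub>R d)) (at t)"
    by (auto intro!: derivative_eq_intros)
  from has_derivative_compose[OF this assms[rule_format, of "a + t *\<^sub>R d"]]
  have "((\<lambda>t. g (a + t *\<^sub>R d)) has_derivative (\<lambda>s. G (a + t *\<^sub>R d) \<bullet> (s *\<^sub>R d))) (at t)"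
    by (simp add: o_def)
  then show ?thesis
    unfolding has_field_derivative_def
    by (rule has_derivative_eq_rhs) (auto simp: fun_eq_iff mult.commute)
qed

lemma convex_on_gradient_ineq:
  fixes g :: "'a::real_inner \<Rightarrow> real"
  assumes convex: "convex_on UNIV g" and deriv: "\<forall>z. (g has_derivative (\<lambda>h. G z \<bullet> h)) (at z)"
  shows "g z + G z \<bullet> (w - z) \<le> g w"
proof -
  define phi where "phi t = g (z + t *\<^sub>R (w - z))" for t
  have "convex_on UNIV phi"
  proof (rule convex_onI[OF _ convex_UNIV])
    fix t x y :: real assume t: "0 < t" "t < 1"
    have "z + ((1 - t) *\<^sub>R x + t *\<^sub>R y) *\<^sub>R (w - z)
        = (1 - t) *\<^sub>R (z + x *\<^sub>R (w - z)) + t *\<^sub>R (z + y *\<^sub>R (w - z))"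
      by (simp add: algebra_simps)
    then show "phi ((1 - t) *\<^sub>R x + t *\<^sub>R y) \<le> (1 - t) * phi x + t * phi y"
      unfolding phi_def using convex_onD[OF convex, of t] t by auto
  qed
  moreover have "(phi has_real_derivative (G z \<bullet> (w - z))) (at 0)"
    using has_real_derivative_along_line[OF deriv, of z "w - z" 0] unfolding phi_def by simp
  ultimately have "(G z \<bullet> (w - z)) * (1 - 0) \<le> phi 1 - phi 0"
    by (intro convex_on_imp_above_tangent) auto
  then show ?thesis unfolding phi_def by simp
qed

lemma lipschitz_gradient_upper_bound:
  fixes g :: "'a::real_inner \<Rightarrow> real"
  assumes deriv: "\<forall>z. (g has_derivative (\<lambda>h. G z \<bullet> h)) (at z)"
    and lipschitz: "\<forall>z1 z2. norm (G z1 - G z2) \<le> C * norm (z1 - z2)"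
  shows "g b \<le> g a + G a \<bullet> (b - a) + C / 2 * (norm (b - a))\<^sup>2"
proof -
  define d where "d = b - a"
  define phi where "phi t = g (a + t *\<^sub>R d) - t * (G a \<bullet> d) - C / 2 * t\<^sup>2 * (norm d)\<^sup>2" for t
  have "phi 1 \<le> phi 0"
  proof (rule DERIV_nonpos_imp_nonincreasing[of 0 1 phi])
    fix t :: real assume t: "0 \<le> t" "t \<le> 1"
    have "(phi has_real_derivative ((G (a + t *\<^sub>R d) - G a) \<bullet> d - C * t * (norm d)\<^sup>2)) (at t)"
      unfolding phi_def using has_real_derivative_along_line[OF deriv, of a d t]
      by (auto intro!: derivative_eq_intros simp: inner_diff_left)
    moreover have "(G (a + t *\<^sub>R d) - G a) \<bullet> d \<le> C * t * (norm d)\<^sup>2"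
    proof -
      have "(G (a + t *\<^sub>R d) - G a) \<bullet> d \<le> norm (G (a + t *\<^sub>R d) - G a) * norm d"
        by (rule norm_cauchy_schwarz)
      also have "\<dots> \<le> (C * norm (t *\<^sub>R d)) * norm d"
        using lipschitz[rule_format, of "a + t *\<^sub>R d" a] by (intro mult_right_mono) auto
      also have "\<dots> = C * t * (norm d)\<^sup>2"
        using t by (simp add: power2_eq_square)
      finally show ?thesis .
    qed
    ultimately show "\<exists>y. (phi has_real_derivative y) (at t) \<and> y \<le> 0"
      by auto
  qed simp
  then show ?thesis unfolding phi_def d_def by (simp add: algebra_simps)
qed

lemma gradient_three_point_ineq:
  fixes g :: "'a::real_inner \<Rightarrow> real"
  assumes "convex_on UNIV g" and deriv: "\<forall>z. (g has_derivative (\<lambda>h. G z \<bullet> h)) (at z)"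
    and "\<forall>z1 z2. norm (G z1 - G z2) \<le> C * norm (z1 - z2)"
  shows "- C / 2 * (norm (b - a))\<^sup>2 \<le> (G a - G c) \<bullet> (b - c)"
proof -
  have "g a + G a \<bullet> (c - a) \<le> g c" "g c + G c \<bullet> (b - c) \<le> g b"
    by (rule convex_on_gradient_ineq[OF assms(1,2)])+
  moreover have "g b \<le> g a + G a \<bullet> (b - a) + C / 2 * (norm (b - a))\<^sup>2"
    by (rule lipschitz_gradient_upper_bound[OF assms(2,3)])
  moreover have "G a \<bullet> (b - a) - G a \<bullet> (c - a) = G a \<bullet> (b - c)"
    by (simp add: inner_diff_right)
  ultimately show ?thesis by (simp add: inner_diff_left)
qed

lemma young_absorb_cross_term:
  fixes C p q m :: real
  assumes "0 < m"
  shows "- (C / m * (C + m) * p\<^sup>2) \<le> - C * p\<^sup>2 - 2 * C * p * q + 2 * m * q\<^sup>2"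
proof -
  have "C\<^sup>2 * p\<^sup>2 / (2 * m) + 2 * m * q\<^sup>2 - 2 * C * p * q = (2 * m * q - C * p)\<^sup>2 / (2 * m)"
    using assms by (simp add: field_simps power2_eq_square)
  moreover have "0 \<le> (2 * m * q - C * p)\<^sup>2 / (2 * m)"
    using assms by simp
  moreover have "C\<^sup>2 * p\<^sup>2 / (2 * m) \<le> C\<^sup>2 * p\<^sup>2 / m"
    using assms by (simp add: frac_le)
  moreover have "C / m * (C + m) * p\<^sup>2 = C\<^sup>2 * p\<^sup>2 / m + C * p\<^sup>2"
    using assms by (simp add: field_simps power2_eq_square)
  ultimately show ?thesis by linarith
qed

(* (x, y) is the point where step (i) evaluates the gradient, with the stale y. The Lipschitz
   bound pays for moving to (x, y'), and Young's inequality against the m-strong convexity in y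
   absorbs the cross term. *)
lemma regularized_gradient_ineq:
  fixes g :: "'a::real_inner \<times> 'b::real_inner \<Rightarrow> real"
  assumes convex: "convex_on UNIV g" and deriv: "\<forall>z. (g has_derivative (\<lambda>h. G z \<bullet> h)) (at z)"
    and lipschitz: "\<forall>z1 z2. norm (G z1 - G z2) \<le> C * norm (z1 - z2)"
    and "0 \<le> mu1" "0 < m" "m \<le> mu2"
  shows "- (C / m * (C + m) * (norm (y - y'))\<^sup>2)
    \<le> 2 * ((fst (G (x, y)) + mu1 *\<^sub>R x - (fst (G (xs, ys)) + mu1 *\<^sub>R xs)) \<bullet> (x - xs)
         + (snd (G (x, y')) + mu2 *\<^sub>R y' - (snd (G (xs, ys)) + mu2 *\<^sub>R ys)) \<bullet> (y' - ys))"
proof -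
  define a b c where "a = (x, y)" and "b = (x, y')" and "c = (xs, ys)"
  define p q where "p = norm (y - y')" and "q = norm (y' - ys)"
  have nba: "norm (b - a) = p"
    unfolding a_def b_def p_def by (simp add: norm_minus_commute)
  have three_point: "- C / 2 * p\<^sup>2
      \<le> (fst (G a) - fst (G c)) \<bullet> (x - xs) + (snd (G a) - snd (G c)) \<bullet> (y' - ys)"
    using gradient_three_point_ineq[OF convex deriv lipschitz, of b a c] nba
    by (simp add: b_def c_def inner_prod_def)
  have "norm (snd (G b) - snd (G a)) \<le> norm (G b - G a)"
    using norm_snd_le[of "snd (G b - G a)" "fst (G b - G a)"] unfolding prod.collapse by (simp only: snd_diff)
  also have "\<dots> \<le> C * p"
    using lipschitz[rule_format, of b a] nba by simp
  finally have "norm (snd (G b) - snd (G a)) \<le> C * p" .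
  then have "norm (snd (G b) - snd (G a)) * q \<le> C * p * q"
    by (simp add: mult_right_mono q_def)
  moreover have "- ((snd (G b) - snd (G a)) \<bullet> (y' - ys)) \<le> norm (snd (G b) - snd (G a)) * q"
    using Cauchy_Schwarz_ineq2[of "snd (G b) - snd (G a)" "y' - ys"] unfolding q_def by linarith
  ultimately have lipschitz_y: "- (C * p * q) \<le> (snd (G b) - snd (G a)) \<bullet> (y' - ys)"
    by linarith
  have "0 \<le> mu1 * (norm (x - xs))\<^sup>2"
    using \<open>0 \<le> mu1\<close> by simp
  moreover have "m * q\<^sup>2 \<le> mu2 * q\<^sup>2"
    using \<open>m \<le> mu2\<close> by (simp add: mult_right_mono)
  moreover have "- (C / m * (C + m) * p\<^sup>2) \<le> - C * p\<^sup>2 - 2 * C * p * q + 2 * m * q\<^sup>2"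
    using young_absorb_cross_term \<open>0 < m\<close> by blast
  ultimately show ?thesis
    using three_point lipschitz_y unfolding a_def b_def c_def p_def q_def power2_norm_eq_inner
    by (simp add: algebra_simps)
qed

section \<open>Quadratic forms and the incidence operator\<close>

lemma symmetric_matrix_inner_commute:
  fixes S :: "real ^ 'n::finite ^ 'n"
  assumes "transpose S = S"
  shows "x \<bullet> (S *v y) = y \<bullet> (S *v x)"
proof -
  have "x \<bullet> (S *v y) = (transpose S *v x) \<bullet> y"
    by (simp add: dot_lmul_matrix)
  then show ?thesis using assms by (simp add: inner_commute)
qed

lemma qf_add:
  assumes "transpose S = S"
  shows "qf S (a + b) = qf S a + 2 * (a \<bullet> (S *v b)) + qf S b"
  unfolding qf_def using symmetric_matrix_inner_commute[OF assms, of b a]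
  by (simp add: matrix_vector_right_distrib inner_add_left inner_add_right)

lemma qf_add_scaleR:
  assumes "transpose S = S"
  shows "qf S (v + t *\<^sub>R d) = qf S v + 2 * t * (v \<bullet> (S *v d)) + t\<^sup>2 * qf S d"
  unfolding qf_add[OF assms] by (simp add: qf_def matrix_vector_mult_scaleR power2_eq_square)

lemma power2_norm_add_scaleR:
  fixes v d :: "'a::real_inner"
  shows "(norm (v + t *\<^sub>R d))\<^sup>2 = (norm v)\<^sup>2 + 2 * t * (v \<bullet> d) + t\<^sup>2 * (norm d)\<^sup>2"
  by (simp only: power2_norm_eq_inner inner_add_left inner_add_right inner_scaleR_left
      inner_scaleR_right inner_commute[of d v]) (simp add: power2_eq_square algebra_simps)

lemma einner_commute: "einner E a b = einner E b a"
  unfolding einner_def by (simp add: inner_commute)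

lemma einner_add_left: "einner E (\<lambda>e. a e + b e) c = einner E a c + einner E b c"
  unfolding einner_def by (simp add: inner_add_left sum.distrib)

lemma einner_diff_left: "einner E (\<lambda>e. a e - b e) c = einner E a c - einner E b c"
  unfolding einner_def by (simp add: inner_diff_left sum_subtractf)

lemma einner_add_scaleR_right: "einner E l (\<lambda>e. a e + t *\<^sub>R b e) = einner E l a + t * einner E l b"
  unfolding einner_def by (simp add: inner_add_right sum.distrib sum_distrib_left)

lemma einner_add_square:
  "einner E (\<lambda>e. a e + b e) (\<lambda>e. a e + b e) = einner E a a + 2 * einner E a b + einner E b b"
  unfolding einner_def
  by (simp add: inner_add_left inner_add_right sum.distrib sum_distrib_left inner_commute)

lemma einner_add_scaleR_square:
  "einner E (\<lambda>e. a e + t *\<^sub>R b e) (\<lambda>e. a e + t *\<^sub>R b e)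
     = einner E a a + 2 * t * einner E a b + t\<^sup>2 * einner E b b"
  unfolding einner_add_square by (simp add: einner_def sum_distrib_left power2_eq_square mult.assoc)

lemma Acol_add: "Acol E i (a + b) e = Acol E i a e + Acol E i b e"
  unfolding Acol_def by auto

lemma AW_add: "AW E (\<lambda>i. x i + y i) e = AW E x e + AW E y e"
  unfolding AW_def by auto

lemma inner_ATi: "ATi E i lam \<bullet> d = einner E lam (Acol E i d)"
  unfolding ATi_def einner_def inner_sum_left by (rule sum.cong) (auto simp: Acol_def)

lemma sum_Acol_eq_AW:
  assumes "E \<subseteq> {(i,j). 1 \<le> i \<and> i < j \<and> j \<le> N}" and "e \<in> E"
  shows "(\<Sum>i\<in>{1..N}. Acol E i (x i) e) = AW E x e"
proof -
  obtain p q where pq: "e = (p, q)" "1 \<le> p" "p < q" "q \<le> N"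
    using assms by auto
  have "(\<Sum>i\<in>{1..N}. Acol E i (x i) e)
      = (\<Sum>i\<in>{1..N}. (if i = p then x i else 0) + (if i = q then - x i else 0))"
    by (rule sum.cong) (use pq assms(2) in \<open>auto simp: Acol_def\<close>)
  also have "\<dots> = x p - x q"
    using pq by (simp add: sum.distrib)
  finally show ?thesis using pq assms(2) by (simp add: AW_def)
qed

lemma sum_einner_Acol:
  assumes "E \<subseteq> {(i,j). 1 \<le> i \<and> i < j \<and> j \<le> N}"
  shows "(\<Sum>i\<in>{1..N}. einner E l (Acol E i (x i))) = einner E l (AW E x)"
proof -
  have "(\<Sum>i\<in>{1..N}. einner E l (Acol E i (x i)))
      = (\<Sum>e\<in>E. \<Sum>i\<in>{1..N}. l e \<bullet> Acol E i (x i) e)"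
    unfolding einner_def by (rule sum.swap)
  also have "\<dots> = einner E l (AW E x)"
    unfolding einner_def by (rule sum.cong[OF refl]) (metis inner_sum_right sum_Acol_eq_AW[OF assms])
  finally show ?thesis .
qed

section \<open>Optimality conditions of the subproblems\<close>

lemma first_order_condition_on_line:
  fixes psi phi :: "real \<Rightarrow> real"
  assumes "(phi has_real_derivative D) (at 0)"
    and "\<And>t. psi t = psi 0 + (phi t - phi 0) + t * L + t\<^sup>2 * R"
    and "\<And>t. psi 0 \<le> psi t"
  shows "D + L = 0"
proof -
  have "((\<lambda>t. psi 0 + (phi t - phi 0) + t * L + t\<^sup>2 * R) has_real_derivative (D + L)) (at 0)"
    using assms(1) by (auto intro!: derivative_eq_intros)
  then have "(psi has_real_derivative (D + L)) (at 0)"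
    using assms(2) by (metis (no_types, lifting) ext)
  then show ?thesis
    using DERIV_local_min[OF _ zero_less_one] assms(3) by blast
qed

lemma FF_fun_upd:
  assumes "i \<in> {1..N}"
  shows "FF f mu1 mu2 N (W(i := w)) Y
    = FF f mu1 mu2 N (W(i := w')) Y + Fi f mu1 mu2 i w (Y i) - Fi f mu1 mu2 i w' (Y i)"
proof -
  have "FF f mu1 mu2 N (W(i := v)) Y
      = Fi f mu1 mu2 i v (Y i) + (\<Sum>j\<in>{1..N} - {i}. Fi f mu1 mu2 j (W j) (Y j))" for v
    unfolding FF_def using assms by (subst sum.remove[of _ i]) (auto intro!: sum.cong)
  then show ?thesis by simp
qed

lemma Lag_fun_upd_line:
  assumes "\<forall>e\<in>E. fst e \<noteq> snd e" and "i \<in> {1..N}"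
  shows "Lag f mu1 mu2 N E rho (W(i := w0 + t *\<^sub>R d)) Y lam
    = Lag f mu1 mu2 N E rho (W(i := w0)) Y lam + (f i (w0 + t *\<^sub>R d, Y i) - f i (w0, Y i))
      + t * (mu1 * (w0 \<bullet> d) - einner E lam (Acol E i d)
             + rho * einner E (AW E (W(i := w0))) (Acol E i d))
      + t\<^sup>2 * (mu1 / 2 * (norm d)\<^sup>2 + rho / 2 * einner E (Acol E i d) (Acol E i d))"
proof -
  define W0 where "W0 = W(i := w0)"
  have AW_line: "AW E (W(i := w0 + t *\<^sub>R d)) = (\<lambda>e. AW E W0 e + t *\<^sub>R Acol E i d e)"
    using assms(1) unfolding W0_def AW_def Acol_def by (auto simp: fun_eq_iff)
  have FF_line: "FF f mu1 mu2 N (W(i := w0 + t *\<^sub>R d)) Y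
      = FF f mu1 mu2 N W0 Y + (f i (w0 + t *\<^sub>R d, Y i) - f i (w0, Y i))
        + mu1 / 2 * (2 * t * (w0 \<bullet> d) + t\<^sup>2 * (norm d)\<^sup>2)"
    unfolding FF_fun_upd[OF assms(2), of f mu1 mu2 W "w0 + t *\<^sub>R d" Y w0] W0_def
    by (simp add: Fi_def power2_norm_add_scaleR algebra_simps)
  show ?thesis
    unfolding Lag_def AW_line FF_line einner_add_scaleR_square einner_add_scaleR_right
    by (simp add: W0_def einner_commute algebra_simps)
qed

lemma x_subproblem_optimality:
  fixes W Y :: "nat \<Rightarrow> real ^ 'n::finite" and P :: "real ^ 'n ^ 'n"
  assumes "E \<subseteq> {(i,j). 1 \<le> i \<and> i < j \<and> j \<le> N}" and "i \<in> {1..N}"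
    and deriv: "\<forall>z. (f i has_derivative (\<lambda>h. grad i z \<bullet> h)) (at z)"
    and sym: "transpose P = P"
    and min: "\<forall>w. Lag f mu1 mu2 N E rho (W(i := w0)) Y lam + 1/2 * qf P (w0 - W i)
               \<le> Lag f mu1 mu2 N E rho (W(i := w)) Y lam + 1/2 * qf P (w - W i)"
  shows "fst (grad i (w0, Y i)) + mu1 *\<^sub>R w0
    = ATi E i lam - rho *\<^sub>R ATi E i (AW E (W(i := w0))) - P *v (w0 - W i)"
proof -
  define v where "v = (fst (grad i (w0, Y i)) + mu1 *\<^sub>R w0)
    - (ATi E i lam - rho *\<^sub>R ATi E i (AW E (W(i := w0))) - P *v (w0 - W i))"
  have "v \<bullet> d = 0" for d
  proof -
    have irreflexive: "\<forall>e\<in>E. fst e \<noteq> snd e"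
      using assms(1) by auto
    define psi where "psi t = Lag f mu1 mu2 N E rho (W(i := w0 + t *\<^sub>R d)) Y lam
      + 1/2 * qf P (w0 + t *\<^sub>R d - W i)" for t
    have "(w0 - W i) \<bullet> (P *v d) = (P *v (w0 - W i)) \<bullet> d"
      by (metis inner_commute symmetric_matrix_inner_commute[OF sym])
    then have qf_line: "qf P (w0 + t *\<^sub>R d - W i)
        = qf P (w0 - W i) + 2 * t * ((P *v (w0 - W i)) \<bullet> d) + t\<^sup>2 * qf P d"
      for t using qf_add_scaleR[OF sym, of "w0 - W i" t d] by (simp add: diff_add_eq)
    have "psi t = psi 0 + (f i (w0 + t *\<^sub>R d, Y i) - f i (w0 + 0 *\<^sub>R d, Y i))
        + t * (v \<bullet> d - fst (grad i (w0, Y i)) \<bullet> d)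
        + t\<^sup>2 * (mu1 / 2 * (norm d)\<^sup>2 + rho / 2 * einner E (Acol E i d) (Acol E i d) + 1/2 * qf P d)"
      for t
      unfolding psi_def Lag_fun_upd_line[OF irreflexive assms(2)] qf_line v_def
      by (simp add: inner_ATi algebra_simps)
    moreover have "psi 0 \<le> psi t" for t
      using min[rule_format, of "w0 + t *\<^sub>R d"] unfolding psi_def by simp
    moreover have
        "((\<lambda>t. f i (w0 + t *\<^sub>R d, Y i)) has_real_derivative fst (grad i (w0, Y i)) \<bullet> d) (at 0)"
      using has_real_derivative_along_line[OF deriv, of "(w0, Y i)" "(d, 0)" 0]
      by (simp add: inner_Pair_0)
    ultimately have "fst (grad i (w0, Y i)) \<bullet> d + (v \<bullet> d - fst (grad i (w0, Y i)) \<bullet> d) = 0"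
      by (intro first_order_condition_on_line[where phi = "\<lambda>t. f i (w0 + t *\<^sub>R d, Y i)"])
    then show ?thesis by simp
  qed
  then have "v = 0"
    using inner_eq_zero_iff by blast
  then show ?thesis unfolding v_def by simp
qed

lemma y_subproblem_optimality:
  fixes x v0 Y :: "real ^ 'n::finite" and Q :: "real ^ 'n ^ 'n"
  assumes deriv: "\<forall>z. (f i has_derivative (\<lambda>h. grad i z \<bullet> h)) (at z)"
    and sym: "transpose Q = Q"
    and min: "\<forall>v. Fi f mu1 mu2 i x v0 + 1/2 * qf Q (v0 - Y) \<le> Fi f mu1 mu2 i x v + 1/2 * qf Q (v - Y)"
  shows "snd (grad i (x, v0)) + mu2 *\<^sub>R v0 = Q *v (Y - v0)"
proof -
  define v where "v = (snd (grad i (x, v0)) + mu2 *\<^sub>R v0) - Q *v (Y - v0)"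
  have "v \<bullet> d = 0" for d
  proof -
    define psi where "psi t = Fi f mu1 mu2 i x (v0 + t *\<^sub>R d) + 1/2 * qf Q (v0 + t *\<^sub>R d - Y)" for t
    have "(v0 - Y) \<bullet> (Q *v d) = (Q *v (v0 - Y)) \<bullet> d"
      by (metis inner_commute symmetric_matrix_inner_commute[OF sym])
    then have qf_line: "qf Q (v0 + t *\<^sub>R d - Y)
        = qf Q (v0 - Y) + 2 * t * ((Q *v (v0 - Y)) \<bullet> d) + t\<^sup>2 * qf Q d"
      for t using qf_add_scaleR[OF sym, of "v0 - Y" t d] by (simp add: diff_add_eq)
    have "psi t = psi 0 + (f i (x, v0 + t *\<^sub>R d) - f i (x, v0 + 0 *\<^sub>R d))
        + t * (v \<bullet> d - snd (grad i (x, v0)) \<bullet> d) + t\<^sup>2 * (mu2 / 2 * (norm d)\<^sup>2 + 1/2 * qf Q d)"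
      for t
      unfolding psi_def Fi_def power2_norm_add_scaleR qf_line v_def
      by (simp add: algebra_simps)
    moreover have "psi 0 \<le> psi t" for t
      using min[rule_format, of "v0 + t *\<^sub>R d"] unfolding psi_def by simp
    moreover have "((\<lambda>t. f i (x, v0 + t *\<^sub>R d)) has_real_derivative snd (grad i (x, v0)) \<bullet> d) (at 0)"
      using has_real_derivative_along_line[OF deriv, of "(x, v0)" "(0, d)" 0]
      by (simp add: inner_Pair_0)
    ultimately have "snd (grad i (x, v0)) \<bullet> d + (v \<bullet> d - snd (grad i (x, v0)) \<bullet> d) = 0"
      by (intro first_order_condition_on_line[where phi = "\<lambda>t. f i (x, v0 + t *\<^sub>R d)"])
    then show ?thesis by simp
  qed
  then have "v = 0"
    using inner_eq_zero_iff by blast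
  then show ?thesis unfolding v_def by simp
qed

lemma alg_seq_node_ineq:
  fixes grad :: "nat \<Rightarrow> (real ^ 'n::finite) \<times> (real ^ 'n) \<Rightarrow> (real ^ 'n) \<times> (real ^ 'n)"
    and k :: nat
  assumes V: "E \<subseteq> {(i,j). 1 \<le> i \<and> i < j \<and> j \<le> N}" and i: "i \<in> {1..N}"
    and deriv: "\<forall>z. (f i has_derivative (\<lambda>h. grad i z \<bullet> h)) (at z)"
    and convex: "convex_on UNIV (f i)"
    and lipschitz: "\<forall>z1 z2. norm (grad i z1 - grad i z2) \<le> C * norm (z1 - z2)"
    and "0 \<le> mu1" "0 < m" "m \<le> mu2"
    and symP: "transpose (P i) = P i" and symQ: "transpose (Q i) = Q i"
    and alg: "alg_seq f mu1 mu2 N E rho gamma P Q Wc Wh lam"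
    and kkt: "KKT grad mu1 mu2 N E Wcs Whs lams"
  defines "xt \<equiv> Wc (Suc k) i - Wcs i" and "dx \<equiv> Wc k i - Wc (Suc k) i"
    and "yt \<equiv> Wh (Suc k) i - Whs i" and "dy \<equiv> Wh k i - Wh (Suc k) i"
  shows "- (C / m * (C + m) * (norm dy)\<^sup>2)
    \<le> 2 * (einner E (\<lambda>e. lam k e - lams e) (Acol E i xt) - rho * einner E (AW E (Wc k)) (Acol E i xt)
           + (rho * einner E (Acol E i xt) (Acol E i dx) + xt \<bullet> (P i *v dx)) + yt \<bullet> (Q i *v dy))"
proof -
  have x_opt: "fst (grad i (Wc (Suc k) i, Wh k i)) + mu1 *\<^sub>R Wc (Suc k) i
      = ATi E i (lam k) - rho *\<^sub>R ATi E i (AW E ((Wc k)(i := Wc (Suc k) i)))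
        - P i *v (Wc (Suc k) i - Wc k i)"
    using alg i unfolding alg_seq_def
    by (intro x_subproblem_optimality[where f = f and grad = grad, OF V i deriv symP]) blast
  have y_opt: "snd (grad i (Wc (Suc k) i, Wh (Suc k) i)) + mu2 *\<^sub>R Wh (Suc k) i = Q i *v dy"
    using alg i unfolding alg_seq_def dy_def
    by (intro y_subproblem_optimality[where f = f and grad = grad, OF deriv symQ]) blast
  have kkt_x: "fst (grad i (Wcs i, Whs i)) + mu1 *\<^sub>R Wcs i = ATi E i lams"
    and kkt_y: "snd (grad i (Wcs i, Whs i)) + mu2 *\<^sub>R Whs i = 0"
    using kkt i unfolding KKT_def by auto
  have AW_step: "AW E ((Wc k)(i := Wc (Suc k) i)) = (\<lambda>e. AW E (Wc k) e - Acol E i dx e)"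
    using V unfolding AW_def Acol_def dx_def by (auto simp: fun_eq_iff)
  have "(fst (grad i (Wc (Suc k) i, Wh k i)) + mu1 *\<^sub>R Wc (Suc k) i
        - (fst (grad i (Wcs i, Whs i)) + mu1 *\<^sub>R Wcs i)) \<bullet> xt
      = einner E (\<lambda>e. lam k e - lams e) (Acol E i xt) - rho * einner E (AW E (Wc k)) (Acol E i xt)
        + (rho * einner E (Acol E i xt) (Acol E i dx) + xt \<bullet> (P i *v dx))"
  proof -
    have "P i *v (Wc (Suc k) i - Wc k i) = - (P i *v dx)"
      unfolding dx_def by (simp add: matrix_vector_mult_diff_distrib)
    then have P_term: "(P i *v (Wc (Suc k) i - Wc k i)) \<bullet> xt = - (xt \<bullet> (P i *v dx))"
      by (simp add: inner_commute)
    show ?thesis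
      unfolding x_opt kkt_x AW_step inner_diff_left inner_scaleR_left inner_ATi P_term einner_diff_left
      by (simp add: einner_commute[of E "Acol E i dx"] algebra_simps)
  qed
  moreover have "(snd (grad i (Wc (Suc k) i, Wh (Suc k) i)) + mu2 *\<^sub>R Wh (Suc k) i
        - (snd (grad i (Wcs i, Whs i)) + mu2 *\<^sub>R Whs i)) \<bullet> yt = yt \<bullet> (Q i *v dy)"
    unfolding y_opt kkt_y by (simp add: inner_commute)
  ultimately show ?thesis
    using regularized_gradient_ineq[OF convex deriv lipschitz \<open>0 \<le> mu1\<close> \<open>0 < m\<close> \<open>m \<le> mu2\<close>,
        where x = "Wc (Suc k) i" and y = "Wh k i" and y' = "Wh (Suc k) i" and xs = "Wcs i" and ys = "Whs i"]
    unfolding xt_def yt_def dy_def by simp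
qed

section \<open>The G-norm\<close>

definition innerG1 :: "nat \<Rightarrow> edge set \<Rightarrow> real \<Rightarrow> (nat \<Rightarrow> real ^ 'n::finite ^ 'n)
    \<Rightarrow> (nat \<Rightarrow> 'n vec) \<Rightarrow> (nat \<Rightarrow> 'n vec) \<Rightarrow> real" where
  "innerG1 N E rho P x x'
     = (\<Sum>i\<in>{1..N}. rho * einner E (Acol E i (x i)) (Acol E i (x' i)) + x i \<bullet> (P i *v x' i))"

definition innerG2 :: "nat \<Rightarrow> (nat \<Rightarrow> real ^ 'n::finite ^ 'n)
    \<Rightarrow> (nat \<Rightarrow> 'n vec) \<Rightarrow> (nat \<Rightarrow> 'n vec) \<Rightarrow> real" where
  "innerG2 N Q y y' = (\<Sum>i\<in>{1..N}. y i \<bullet> (Q i *v y' i))"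

lemma normG_eq_innerG:
  "normG N E rho gamma P Q x y l
    = innerG1 N E rho P x x + innerG2 N Q y y + 1 / (gamma * rho) * einner E l l"
  unfolding normG_def innerG1_def innerG2_def qf_def ..

lemma normM_eq_innerG:
  "normM N E rho gamma P Q C m x y l
    = innerG1 N E rho P x x + innerG2 N Q y y - (\<Sum>i\<in>{1..N}. C i / m * (C i + m) * (norm (y i))\<^sup>2)
      + (2 - gamma) / (gamma\<^sup>2 * rho) * einner E l l + 2 / gamma * einner E l (AW E x)"
  unfolding normM_def innerG1_def innerG2_def qf_def by (simp add: sum_subtractf)

lemma normG_add:
  assumes "\<forall>i\<in>{1..N}. transpose (P i) = P i \<and> transpose (Q i) = Q i"
  shows "normG N E rho gamma P Q (\<lambda>i. x i + x' i) (\<lambda>i. y i + y' i) (\<lambda>e. l e + l' e)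
    = normG N E rho gamma P Q x y l
      + 2 * (innerG1 N E rho P x x' + innerG2 N Q y y' + 1 / (gamma * rho) * einner E l l')
      + normG N E rho gamma P Q x' y' l'"
proof -
  have G1: "innerG1 N E rho P (\<lambda>i. x i + x' i) (\<lambda>i. x i + x' i)
      = innerG1 N E rho P x x + 2 * innerG1 N E rho P x x' + innerG1 N E rho P x' x'"
  proof -
    have "rho * einner E (Acol E i (x i + x' i)) (Acol E i (x i + x' i)) + (x i + x' i) \<bullet> (P i *v (x i + x' i))
        = (rho * einner E (Acol E i (x i)) (Acol E i (x i)) + x i \<bullet> (P i *v x i))
          + 2 * (rho * einner E (Acol E i (x i)) (Acol E i (x' i)) + x i \<bullet> (P i *v x' i))
          + (rho * einner E (Acol E i (x' i)) (Acol E i (x' i)) + x' i \<bullet> (P i *v x' i))"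
      if "i \<in> {1..N}" for i
    proof -
      have "Acol E i (x i + x' i) = (\<lambda>e. Acol E i (x i) e + Acol E i (x' i) e)"
        by (rule ext) (rule Acol_add)
      then show ?thesis
        using qf_add[of "P i" "x i" "x' i"] assms that
        unfolding qf_def by (simp add: einner_add_square algebra_simps)
    qed
    then show ?thesis
      unfolding innerG1_def by (simp add: sum.distrib sum_distrib_left)
  qed
  have G2: "innerG2 N Q (\<lambda>i. y i + y' i) (\<lambda>i. y i + y' i)
      = innerG2 N Q y y + 2 * innerG2 N Q y y' + innerG2 N Q y' y'"
    using qf_add[of "Q i" "y i" "y' i" for i] assms
    unfolding innerG2_def qf_def by (simp add: sum.distrib sum_distrib_left)
  show ?thesis
    unfolding normG_eq_innerG G1 G2 einner_add_square by (simp add: algebra_simps)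
qed

lemma normG_diff_ge_normM:
  fixes Wc0 Wc1 Wcs Wh0 Wh1 Whs :: "nat \<Rightarrow> real ^ 'n::finite" and l0 l1 ls :: "edge \<Rightarrow> real ^ 'n"
  assumes V: "E \<subseteq> {(i,j). 1 \<le> i \<and> i < j \<and> j \<le> N}"
    and sym: "\<forall>i\<in>{1..N}. transpose (P i) = P i \<and> transpose (Q i) = Q i"
    and "0 < rho" "0 < gamma"
    and dual: "\<forall>e\<in>E. l1 e = l0 e - (gamma * rho) *\<^sub>R AW E Wc1 e"
    and feasible: "\<forall>e\<in>E. AW E Wcs e = 0"
    and node: "\<forall>i\<in>{1..N}. - (C i / m * (C i + m) * (norm (Wh0 i - Wh1 i))\<^sup>2)
      \<le> 2 * (einner E (\<lambda>e. l0 e - ls e) (Acol E i (Wc1 i - Wcs i))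
             - rho * einner E (AW E Wc0) (Acol E i (Wc1 i - Wcs i))
             + (rho * einner E (Acol E i (Wc1 i - Wcs i)) (Acol E i (Wc0 i - Wc1 i))
                + (Wc1 i - Wcs i) \<bullet> (P i *v (Wc0 i - Wc1 i)))
             + (Wh1 i - Whs i) \<bullet> (Q i *v (Wh0 i - Wh1 i)))"
  shows "normM N E rho gamma P Q C m (\<lambda>i. Wc0 i - Wc1 i) (\<lambda>i. Wh0 i - Wh1 i) (\<lambda>e. l0 e - l1 e)
    \<le> normG N E rho gamma P Q (\<lambda>i. Wc0 i - Wcs i) (\<lambda>i. Wh0 i - Whs i) (\<lambda>e. l0 e - ls e)
       - normG N E rho gamma P Q (\<lambda>i. Wc1 i - Wcs i) (\<lambda>i. Wh1 i - Whs i) (\<lambda>e. l1 e - ls e)"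
proof -
  define x dx y dy l dl where "x i = Wc1 i - Wcs i" and "dx i = Wc0 i - Wc1 i"
    and "y i = Wh1 i - Whs i" and "dy i = Wh0 i - Wh1 i"
    and "l e = l1 e - ls e" and "dl e = l0 e - l1 e" for i e
  define c where "c = 1 / (gamma * rho)"
  have AW_x: "AW E x e = c *\<^sub>R dl e" if "e \<in> E" for e
    using dual feasible that \<open>0 < rho\<close> \<open>0 < gamma\<close> by (simp add: AW_def x_def dl_def c_def)
  have AW_Wc0: "AW E Wc0 = (\<lambda>e. AW E x e + AW E dx e)"
    using feasible by (auto simp: AW_def x_def dx_def fun_eq_iff)
  have "- (\<Sum>i\<in>{1..N}. C i / m * (C i + m) * (norm (dy i))\<^sup>2)
      \<le> (\<Sum>i\<in>{1..N}. 2 * (einner E (\<lambda>e. l0 e - ls e) (Acol E i (x i))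
             - rho * einner E (AW E Wc0) (Acol E i (x i))
             + (rho * einner E (Acol E i (x i)) (Acol E i (dx i)) + x i \<bullet> (P i *v dx i))
             + y i \<bullet> (Q i *v dy i)))"
    unfolding sum_negf[symmetric] x_def dx_def y_def dy_def by (rule sum_mono) (use node in blast)
  then have summed: "- (\<Sum>i\<in>{1..N}. C i / m * (C i + m) * (norm (dy i))\<^sup>2)
      \<le> 2 * (einner E (\<lambda>e. l0 e - ls e) (AW E x) - rho * einner E (AW E Wc0) (AW E x)
             + innerG1 N E rho P x dx + innerG2 N Q y dy)"
    unfolding innerG1_def innerG2_def sum_einner_Acol[OF V, symmetric]
    by (simp add: sum.distrib sum_subtractf sum_distrib_left)
  have AW_x_right: "einner E a (AW E x) = c * einner E a dl" for a
    unfolding einner_def sum_distrib_left using AW_x by (intro sum.cong) auto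
  have "einner E (AW E Wc0) (AW E x) = c * einner E (\<lambda>e. AW E x e + AW E dx e) dl"
    unfolding AW_x_right AW_Wc0 ..
  also have "\<dots> = c * (c * einner E dl dl + einner E dl (AW E dx))"
    unfolding einner_add_left einner_commute[of E "AW E x"] einner_commute[of E "AW E dx"] AW_x_right ..
  finally have cross: "einner E (AW E Wc0) (AW E x) = c * c * einner E dl dl + c * einner E dl (AW E dx)"
    by (simp add: algebra_simps)
  have split: "(\<lambda>i. Wc0 i - Wcs i) = (\<lambda>i. x i + dx i)" "(\<lambda>i. Wh0 i - Whs i) = (\<lambda>i. y i + dy i)"
      "(\<lambda>e. l0 e - ls e) = (\<lambda>e. l e + dl e)" "(\<lambda>i. Wc1 i - Wcs i) = x" "(\<lambda>i. Wh1 i - Whs i) = y"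
      "(\<lambda>e. l1 e - ls e) = l" "(\<lambda>i. Wc0 i - Wc1 i) = dx" "(\<lambda>i. Wh0 i - Wh1 i) = dy"
      "(\<lambda>e. l0 e - l1 e) = dl"
    by (simp_all add: x_def dx_def y_def dy_def l_def dl_def fun_eq_iff)
  have coeff: "2 / gamma = 2 * rho * c" "(2 - gamma) / (gamma\<^sup>2 * rho) = 2 * rho * c * c - c"
    unfolding c_def using \<open>0 < rho\<close> \<open>0 < gamma\<close> by (auto simp: field_simps power2_eq_square)
  show ?thesis
    using summed unfolding cross split
    unfolding normG_add[OF sym] normG_eq_innerG[of N E rho gamma P Q dx] normM_eq_innerG coeff
      einner_add_left AW_x_right c_def[symmetric]
    by (simp add: algebra_simps)
qed

theorem lemma2:
  fixes N :: nat and E :: "edge set"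
    and f :: "nat \<Rightarrow> (real ^ 'n) \<times> (real ^ 'n) \<Rightarrow> real"
    and grad :: "nat \<Rightarrow> (real ^ 'n) \<times> (real ^ 'n) \<Rightarrow> (real ^ 'n) \<times> (real ^ 'n)"
    and C :: "nat \<Rightarrow> real" and mu1 mu2 m rho gamma :: real
    and P Q :: "nat \<Rightarrow> real ^ 'n ^ 'n"
    and Wc Wh :: "nat \<Rightarrow> nat \<Rightarrow> real ^ 'n" and lam :: "nat \<Rightarrow> edge \<Rightarrow> real ^ 'n"
    and Wcs Whs :: "nat \<Rightarrow> real ^ 'n" and lams :: "edge \<Rightarrow> real ^ 'n"
    and k :: nat
  assumes "N \<ge> 2" and "connected_graph N E"
    and "\<forall>i\<in>{1..N}. \<forall>z. (f i has_derivative (\<lambda>h. grad i z \<bullet> h)) (at z)"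
    and "\<forall>i\<in>{1..N}. convex_on UNIV (f i)"
    and "\<forall>i\<in>{1..N}. \<forall>z1 z2. norm (grad i z1 - grad i z2) \<le> C i * norm (z1 - z2)"
    and "mu1 \<ge> 0" and "mu2 > 0" and "0 < m" and "m \<le> mu2"
    and "rho > 0" and "gamma > 0"
    and "\<forall>i\<in>{1..N}. psd_sym (P i) \<and> psd_sym (Q i)"
    and "alg_seq f mu1 mu2 N E rho gamma P Q Wc Wh lam"
    and "KKT grad mu1 mu2 N E Wcs Whs lams"
    and "k \<ge> 1"
  shows "normG N E rho gamma P Q (\<lambda>i. Wc k i - Wcs i) (\<lambda>i. Wh k i - Whs i) (\<lambda>e. lam k e - lams e)
       - normG N E rho gamma P Q (\<lambda>i. Wc (Suc k) i - Wcs i) (\<lambda>i. Wh (Suc k) i - Whs i)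
           (\<lambda>e. lam (Suc k) e - lams e)
       \<ge> normM N E rho gamma P Q C m (\<lambda>i. Wc k i - Wc (Suc k) i) (\<lambda>i. Wh k i - Wh (Suc k) i)
           (\<lambda>e. lam k e - lam (Suc k) e)"
proof -
  have V: "E \<subseteq> {(i,j). 1 \<le> i \<and> i < j \<and> j \<le> N}"
    using assms(2) unfolding connected_graph_def by blast
  have sym: "\<forall>i\<in>{1..N}. transpose (P i) = P i \<and> transpose (Q i) = Q i"
    using assms(12) unfolding psd_sym_def by blast
  show ?thesis
  proof (rule normG_diff_ge_normM[OF V sym assms(10,11)])
    show "\<forall>e\<in>E. lam (Suc k) e = lam k e - (gamma * rho) *\<^sub>R AW E (Wc (Suc k)) e"
      using assms(13) unfolding alg_seq_def by blast
    show "\<forall>e\<in>E. AW E Wcs e = 0"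
      using assms(14) unfolding KKT_def by blast
  qed (use assms(3-6,8,9,13,14) sym in \<open>blast intro: alg_seq_node_ineq[OF V]\<close>)
qed

end
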